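(* Let $G=(V,E)$ be a connected graph on $n\geq 4$ vertices with $V=\{p_1,\ldots,p_{n-1},q\}$, where $p_1-p_2-\cdots-p_{n-1}$ is a path in $G$. If $\psi_{n-1}(G)=2$ and $\psi_n(G)=0$, then $2\leq d(q)\leq \left\lceil\frac{n-3}{2}\right\rceil$.
   Context: All graphs are finite and simple. For a graph $G$ and a positive integer $k$, a $k$-path vertex cover ($k$-PVC) of $G$ is a set $S$ of vertices such that every path on $k$ vertices in $G$ contains at least one vertex of $S$ (if $G$ has no path on $k$ vertices, the empty set is a $k$-PVC). $\psi_k(G)$ denotes the minimum cardinality of a $k$-PVC of $G$. $d(v)$ is the degree of a vertex $v$. *)

theory Defs
  imports Complex_Main
begin

definition simple_graph :: "'a set \<Rightarrow> ('a \<Rightarrow> 'a \<Rightarrow> bool) \<Rightarrow> bool" where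
  "simple_graph V E \<longleftrightarrow> finite V \<and> (\<forall>x y. E x y \<longrightarrow> x \<in> V \<and> y \<in> V)
     \<and> (\<forall>x y. E x y \<longrightarrow> E y x) \<and> (\<forall>x. \<not> E x x)"

definition graph_connected :: "'a set \<Rightarrow> ('a \<Rightarrow> 'a \<Rightarrow> bool) \<Rightarrow> bool" where
  "graph_connected V E \<longleftrightarrow> (\<forall>x\<in>V. \<forall>y\<in>V. (x, y) \<in> {(a, b). E a b}\<^sup>*)"

text \<open>A path in G given as the list of its vertices (distinct, consecutive ones adjacent).
  A path on k vertices is such a list of length k.\<close>
definition is_path :: "'a set \<Rightarrow> ('a \<Rightarrow> 'a \<Rightarrow> bool) \<Rightarrow> 'a list \<Rightarrow> bool" where
  "is_path V E xs \<longleftrightarrow> xs \<noteq> [] \<and> distinct xs \<and> set xs \<subseteq> V \<and> successively E xs"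

definition is_kpvc :: "'a set \<Rightarrow> ('a \<Rightarrow> 'a \<Rightarrow> bool) \<Rightarrow> nat \<Rightarrow> 'a set \<Rightarrow> bool" where
  "is_kpvc V E k S \<longleftrightarrow> S \<subseteq> V \<and>
     (\<forall>xs. is_path V E xs \<and> length xs = k \<longrightarrow> set xs \<inter> S \<noteq> {})"

definition psi :: "'a set \<Rightarrow> ('a \<Rightarrow> 'a \<Rightarrow> bool) \<Rightarrow> nat \<Rightarrow> nat" where
  "psi V E k = Min (card ` {S. is_kpvc V E k S})"

definition degree :: "'a set \<Rightarrow> ('a \<Rightarrow> 'a \<Rightarrow> bool) \<Rightarrow> 'a \<Rightarrow> nat" where
  "degree V E v = card {u \<in> V. E v u}"

end

theory Submission
  imports Defs
begin

text \<open>Since \<open>\<psi>\<^sub>n(G) = 0\<close>, the graph has no Hamiltonian path. Hence \<open>q\<close> is adjacent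
  neither to an end \<open>p\<^sub>1\<close>, \<open>p\<^sub>n\<^sub>-\<^sub>1\<close> of the path nor to two consecutive vertices
  \<open>p\<^sub>i\<close>, \<open>p\<^sub>i\<^sub>+\<^sub>1\<close>, since otherwise \<open>q\<close> could be spliced into the path; so the neighbour
  indices and their successors are disjoint subsets of \<open>{2, \<dots>, n-1}\<close>, giving
  \<open>2 d(q) \<le> n - 2\<close>. Connectivity gives \<open>d(q) \<ge> 1\<close>, and if \<open>q\<close> had a single neighbour
  \<open>u\<close>, every path on \<open>n - 1\<close> vertices avoiding \<open>u\<close> would have to contain \<open>q\<close> and
  hence \<open>u\<close>; so \<open>{u}\<close> would be an \<open>(n-1)\<close>-PVC, contradicting \<open>\<psi>\<^sub>n\<^sub>-\<^sub>1(G) = 2\<close>.\<close>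

lemma finite_card_kpvc:
  assumes "finite V"
  shows "finite (card ` {S. is_kpvc V E k S})"
proof -
  have "{S. is_kpvc V E k S} \<subseteq> Pow V" unfolding is_kpvc_def by auto
  then show ?thesis using assms by (meson finite_Pow_iff finite_imageI finite_subset)
qed

lemma psi_le_card:
  assumes "finite V" and "is_kpvc V E k S"
  shows "psi V E k \<le> card S"
  unfolding psi_def using assms by (intro Min_le finite_card_kpvc) auto

lemma psi_eq_0_imp_no_path:
  assumes "finite V" and "psi V E k = 0" and "is_path V E xs"
  shows "length xs \<noteq> k"
proof -
  have "is_kpvc V E k V" unfolding is_kpvc_def is_path_def by (auto simp: Int_absorb2)
  then have "card ` {S. is_kpvc V E k S} \<noteq> {}" by blast
  from Min_in[OF finite_card_kpvc[OF assms(1)] this] assms(2)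
  obtain S where S: "is_kpvc V E k S" "card S = 0" unfolding psi_def by auto
  then have "S = {}" using assms(1) unfolding is_kpvc_def by (meson card_0_eq finite_subset)
  then show ?thesis using S(1) assms(3) unfolding is_kpvc_def by auto
qed

lemma successively_map_upt:
  assumes "\<forall>i. a \<le> i \<and> i + 1 < b \<longrightarrow> E (p i) (p (i + 1))"
  shows "successively E (map p [a..<b])"
  using assms by (auto simp: successively_conv_nth)

lemma successively_sym_has_neighbour:
  assumes "successively E xs" and "v \<in> set xs" and "length xs \<ge> 2"
    and "\<forall>x y. E x y \<longrightarrow> E y x"
  shows "\<exists>u\<in>set xs. E v u"
proof -
  obtain ys zs where xs: "xs = ys @ v # zs" using assms(2) by (meson split_list)
  show ?thesis
  proof (cases "ys = []")
    case False
    then have "E (last ys) v" using assms(1) xs by (auto simp: successively_append_iff)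
    then show ?thesis using assms(4) xs False by fastforce
  next
    case True
    then obtain z zs' where "zs = z # zs'" using assms(3) xs by (cases zs) auto
    then show ?thesis using assms(1) xs True by (auto simp: successively_Cons)
  qed
qed

text \<open>Splicing \<open>q\<close> between \<open>p\<^sub>i\<close> and \<open>p\<^sub>i\<^sub>+\<^sub>1\<close>; \<open>i = 0\<close> and \<open>i = m\<close> put \<open>q\<close> at an end.\<close>

lemma is_path_splice:
  assumes inj: "inj_on p {1..m}" and q: "q \<notin> p ` {1..m}"
    and V: "V = insert q (p ` {1..m})"
    and chain: "\<forall>i. 1 \<le> i \<and> i < m \<longrightarrow> E (p i) (p (i + 1))"
    and "i \<le> m"
    and left: "1 \<le> i \<Longrightarrow> E (p i) q"
    and right: "i < m \<Longrightarrow> E q (p (i + 1))"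
  shows "is_path V E (map p [1..<i+1] @ q # map p [i+1..<m+1])"
proof -
  let ?A = "map p [1..<i+1]" and ?B = "map p [i+1..<m+1]"
  have "[1..<m+1] = [1..<i+1] @ [i+1..<m+1]"
    using upt_add_eq_append[of 1 "i + 1" "m - i"] \<open>i \<le> m\<close> by simp
  moreover have "distinct (map p [1..<m+1])"
  proof -
    have "set [1..<m+1] = {1..m}" by auto
    then show ?thesis using inj by (simp add: distinct_map)
  qed
  ultimately have "distinct (?A @ ?B)" by simp
  moreover have "q \<notin> set ?A" "q \<notin> set ?B" using q \<open>i \<le> m\<close> by auto
  moreover have "successively E (?A @ q # ?B)"
  proof -
    have "successively E ?A" by (rule successively_map_upt) (use chain \<open>i \<le> m\<close> in auto)
    moreover have "successively E ?B" by (rule successively_map_upt) (use chain in auto)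
    moreover have "i < m \<Longrightarrow> hd ?B = p (i + 1)" by (simp add: upt_conv_Cons del: upt_Suc)
    moreover have "1 \<le> i \<Longrightarrow> last ?A = p i" by (simp add: last_map)
    ultimately show ?thesis using left right \<open>i \<le> m\<close>
      by (auto simp: successively_append_iff successively_Cons)
  qed
  moreover have "set (?A @ q # ?B) \<subseteq> V" using V \<open>i \<le> m\<close> by auto
  ultimately show ?thesis unfolding is_path_def by simp
qed

lemma neighbour_indices_if_no_hamiltonian_path:
  assumes inj: "inj_on p {1..m}" and q: "q \<notin> p ` {1..m}"
    and V: "V = insert q (p ` {1..m})"
    and chain: "\<forall>i. 1 \<le> i \<and> i < m \<longrightarrow> E (p i) (p (i + 1))"
    and sym: "\<forall>x y. E x y \<longrightarrow> E y x"
    and no_ham: "\<And>xs. is_path V E xs \<Longrightarrow> length xs \<noteq> m + 1"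
  defines "N \<equiv> {i \<in> {1..m}. E q (p i)}"
  shows "N \<subseteq> {2..<m}" and "\<forall>i\<in>N. Suc i \<notin> N"
proof -
  have no_splice: False if "i \<le> m" "1 \<le> i \<Longrightarrow> E (p i) q" "i < m \<Longrightarrow> E q (p (i + 1))" for i
    using no_ham[OF is_path_splice[OF inj q V chain that]] \<open>i \<le> m\<close> by (simp del: upt_Suc)
  show "N \<subseteq> {2..<m}"
    using no_splice[of 0] no_splice[of m] sym unfolding N_def
    by (fastforce simp: le_less Suc_le_eq)
  show "\<forall>i\<in>N. Suc i \<notin> N"
    using no_splice sym unfolding N_def by fastforce
qed

lemma two_card_le_if_no_consecutive:
  assumes "N \<subseteq> {a..<b}" and "\<forall>i\<in>N. Suc i \<notin> N"
  shows "2 * card N \<le> Suc b - a"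
proof -
  have "finite N" using assms(1) finite_subset by blast
  have "N \<inter> Suc ` N = {}" using assms(2) by blast
  then have "2 * card N = card (N \<union> Suc ` N)"
    using \<open>finite N\<close> by (simp add: card_Un_disjoint card_image)
  also have "\<dots> \<le> card {a..b}" using assms(1) by (intro card_mono) auto
  finally show ?thesis by simp
qed

lemma degree_eq_card_neighbour_indices:
  assumes "V = insert q (p ` {1..m})" and "inj_on p {1..m}" and "\<not> E q q"
  shows "degree V E q = card {i \<in> {1..m}. E q (p i)}"
proof -
  have "{u \<in> V. E q u} = p ` {i \<in> {1..m}. E q (p i)}" using assms(1,3) by auto
  moreover have "inj_on p {i \<in> {1..m}. E q (p i)}" using assms(2) by (rule inj_on_subset) auto
  ultimately show ?thesis unfolding degree_def by (simp add: card_image)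
qed

lemma degree_pos_if_connected:
  assumes "simple_graph V E" and "graph_connected V E"
    and "q \<in> V" and "u \<in> V" and "q \<noteq> u"
  shows "degree V E q \<noteq> 0"
proof -
  have "(q, u) \<in> {(a, b). E a b}\<^sup>*" using assms(2-4) unfolding graph_connected_def by blast
  then obtain w where "E q w" using assms(5) by (blast elim: converse_rtranclE)
  then have "w \<in> {v \<in> V. E q v}" using assms(1) unfolding simple_graph_def by blast
  moreover have "finite V" using assms(1) unfolding simple_graph_def by blast
  ultimately show ?thesis unfolding degree_def by auto
qed

text \<open>A path on \<open>|V| - 1\<close> vertices missing \<open>u\<close> must contain every other vertex.\<close>

lemma is_kpvc_unique_neighbour:
  assumes G: "simple_graph V E" and "card V \<ge> 3" and "q \<in> V" and "E q u"
    and only_u: "\<And>w. E q w \<Longrightarrow> w = u"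
  shows "is_kpvc V E (card V - 1) {u}"
  unfolding is_kpvc_def
proof (intro conjI allI impI)
  have "finite V" and sym: "\<forall>x y. E x y \<longrightarrow> E y x" and "u \<in> V" and "q \<noteq> u"
    using G \<open>E q u\<close> unfolding simple_graph_def by blast+
  show "{u} \<subseteq> V" using \<open>u \<in> V\<close> by simp
  fix xs assume xs: "is_path V E xs \<and> length xs = card V - 1"
  show "set xs \<inter> {u} \<noteq> {}"
  proof
    assume avoid: "set xs \<inter> {u} = {}"
    then have "set xs \<subseteq> V - {u}" using xs unfolding is_path_def by auto
    moreover have "card (set xs) = card (V - {u})"
      using xs \<open>u \<in> V\<close> \<open>finite V\<close> unfolding is_path_def by (simp add: distinct_card)
    ultimately have "set xs = V - {u}" using \<open>finite V\<close> by (intro card_subset_eq) auto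
    then have "q \<in> set xs" using \<open>q \<in> V\<close> \<open>q \<noteq> u\<close> by blast
    moreover have "2 \<le> length xs" using xs \<open>card V \<ge> 3\<close> by simp
    ultimately obtain w where "w \<in> set xs" "E q w"
      using successively_sym_has_neighbour[of E xs q] xs sym unfolding is_path_def by blast
    then show False using only_u avoid by auto
  qed
qed

lemma psi_le_1_if_degree_eq_1:
  assumes G: "simple_graph V E" and "card V \<ge> 3" and "q \<in> V" and "degree V E q = 1"
  shows "psi V E (card V - 1) \<le> 1"
proof -
  obtain u where u: "{w \<in> V. E q w} = {u}"
    using assms(4) unfolding degree_def by (meson card_1_singletonE)
  moreover have "\<And>w. E q w \<Longrightarrow> w = u" using G u unfolding simple_graph_def by blast
  ultimately have "is_kpvc V E (card V - 1) {u}"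
    using assms(1-3) by (intro is_kpvc_unique_neighbour) auto
  then have "psi V E (card V - 1) \<le> card {u}"
    using G unfolding simple_graph_def by (intro psi_le_card) auto
  then show ?thesis by simp
qed

theorem mainTheorem12:
  fixes V :: "'a set" and E :: "'a \<Rightarrow> 'a \<Rightarrow> bool" and p :: "nat \<Rightarrow> 'a" and q :: 'a and n :: nat
  assumes "simple_graph V E"
    and "graph_connected V E"
    and "n \<ge> 4"
    and "card V = n"
    and "V = insert q (p ` {1..n-1})"
    and "inj_on p {1..n-1}"
    and "q \<notin> p ` {1..n-1}"
    and "\<forall>i. 1 \<le> i \<and> i < n - 1 \<longrightarrow> E (p i) (p (i+1))"
    and "psi V E (n-1) = 2"
    and "psi V E n = 0"
  shows "2 \<le> degree V E q \<and> int (degree V E q) \<le> \<lceil>(real n - 3) / 2\<rceil>"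
proof -
  have G: "finite V" "\<forall>x y. E x y \<longrightarrow> E y x" "\<not> E q q"
    using assms(1) unfolding simple_graph_def by blast+
  have "n = (n - 1) + 1" using assms(3) by simp
  then have no_ham: "length xs \<noteq> (n - 1) + 1" if "is_path V E xs" for xs
    using psi_eq_0_imp_no_path[OF G(1) assms(10) that] by simp
  define N where "N = {i \<in> {1..n-1}. E q (p i)}"
  have "2 * card N \<le> Suc (n - 1) - 2"
    using neighbour_indices_if_no_hamiltonian_path[OF assms(6,7,5,8) G(2) no_ham]
    unfolding N_def by (rule two_card_le_if_no_consecutive)
  moreover have "degree V E q = card N"
    unfolding N_def using assms(5,6) G(3) by (rule degree_eq_card_neighbour_indices)
  ultimately have "2 * degree V E q \<le> n - 2" by simp
  then have "2 * real (degree V E q) \<le> real n - 2" using assms(3) by linarith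
  then have "real (degree V E q) - 1 < (real n - 3) / 2" by (simp add: field_simps)
  then have upper: "int (degree V E q) \<le> \<lceil>(real n - 3) / 2\<rceil>"
    by (simp add: le_ceiling_iff)
  have "q \<in> V" "p 1 \<in> V" "q \<noteq> p 1" using assms(3,5,7) by auto
  then have "degree V E q \<noteq> 0" by (rule degree_pos_if_connected[OF assms(1,2)])
  moreover have "degree V E q \<noteq> 1"
    using psi_le_1_if_degree_eq_1[OF assms(1) _ \<open>q \<in> V\<close>] assms(3,4,9) by fastforce
  ultimately show ?thesis using upper by simp
qed

end
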